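(* Let $\Gamma$ be a countable group and $c\in\mathrm Z^2(\Gamma,\mathbb R)$. For $r\in\mathbb R$ let $c_r=\exp(irc)\in\mathrm Z^2(\Gamma,\mathbb T)$. If $c_r\in\mathrm B^2(\Gamma,\mathbb T)$ for every $r\in\mathbb R$, then $c\in\mathrm B^2(\Gamma,\mathbb R)$.
   Context: $\mathbb R$ and $\mathbb T$ carry the trivial $\Gamma$-action; $\mathrm Z^2$ and $\mathrm B^2$ denote group 2-cocycles ($c(g,h)+c(gh,k)=c(g,hk)+c(h,k)$) and 2-coboundaries ($c(g,h)=b(g)+b(h)-b(gh)$, multiplicatively for $\mathbb T$). *)

theory Defs
  imports Complex_Main "HOL-Algebra.Group" "HOL-Library.Countable_Set"
begin

definition real_cocycle2 :: "('g, 'b) monoid_scheme \<Rightarrow> ('g \<Rightarrow> 'g \<Rightarrow> real) \<Rightarrow> bool" where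
  "real_cocycle2 G c \<longleftrightarrow>
     (\<forall>g\<in>carrier G. \<forall>h\<in>carrier G. \<forall>k\<in>carrier G.
        c g h + c (g \<otimes>\<^bsub>G\<^esub> h) k = c g (h \<otimes>\<^bsub>G\<^esub> k) + c h k)"

definition real_coboundary2 :: "('g, 'b) monoid_scheme \<Rightarrow> ('g \<Rightarrow> 'g \<Rightarrow> real) \<Rightarrow> bool" where
  "real_coboundary2 G c \<longleftrightarrow>
     (\<exists>b :: 'g \<Rightarrow> real. \<forall>g\<in>carrier G. \<forall>h\<in>carrier G.
        c g h = b g + b h - b (g \<otimes>\<^bsub>G\<^esub> h))"

definition circle_coboundary2 :: "('g, 'b) monoid_scheme \<Rightarrow> ('g \<Rightarrow> 'g \<Rightarrow> complex) \<Rightarrow> bool" where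
  "circle_coboundary2 G w \<longleftrightarrow>
     (\<exists>b :: 'g \<Rightarrow> complex. (\<forall>g\<in>carrier G. cmod (b g) = 1) \<and>
        (\<forall>g\<in>carrier G. \<forall>h\<in>carrier G.
           w g h = b g * b h * inverse (b (g \<otimes>\<^bsub>G\<^esub> h))))"

end

theory Submission
  imports Defs "HOL-Library.Function_Algebras" "HOL-Analysis.Analysis"
begin

(* For every r there is \<theta> with r c(g,h) = \<theta> g + \<theta> h - \<theta> (gh) modulo 2\<pi>\<int>.
   Let \<partial>(g,h) = \<delta>g + \<delta>h - \<delta>(gh). Along a finite linear relation \<Sum> a\<^sub>i \<partial>(g\<^sub>i,h\<^sub>i) = 0 the
   \<theta>-terms cancel, so r \<Sum> a\<^sub>i c(g\<^sub>i,h\<^sub>i) lies in the countable set 2\<pi> \<Sum> a\<^sub>i \<int> for every real r,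
   which forces \<Sum> a\<^sub>i c(g\<^sub>i,h\<^sub>i) = 0. Hence \<partial>(g,h) \<mapsto> c(g,h) extends to a linear functional L
   on all real functions on the group (via a Hamel basis), and b x = L(\<delta>x) satisfies
   c(g,h) = b g + b h - b (gh). *)

lemma eq_0_if_multiples_in_countable:
  fixes s :: real
  assumes "countable A" and "\<And>r. r * s \<in> A"
  shows "s = 0"
proof (rule ccontr)
  assume "s \<noteq> 0"
  then have "UNIV \<subseteq> (\<lambda>y. y / s) ` A"
    using assms(2) by (auto intro!: image_eqI[of _ "\<lambda>y. y / s"])
  then have "countable (UNIV :: real set)"
    using assms(1) by (meson countable_image countable_subset)
  then show False
    using uncountable_UNIV_real by blast
qed

lemma sum_fun_apply: "(\<Sum>a\<in>A. f a) x = (\<Sum>a\<in>A. f a x)"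
  by (induction A rule: infinite_finite_induct) auto

lemma vector_space_pair_fun_real:
  "vector_space_pair (\<lambda>r (u :: 'a \<Rightarrow> real) x. r * u x) (scaleR :: real \<Rightarrow> real \<Rightarrow> real)"
  by unfold_locales (simp_all add: fun_eq_iff algebra_simps)

lemma (in vector_space_pair) linear_extend_respecting_relations:
  assumes rel: "\<And>I a. finite I \<Longrightarrow> I \<subseteq> P \<Longrightarrow>
    (\<Sum>i\<in>I. a i *a f i) = 0 \<Longrightarrow> (\<Sum>i\<in>I. a i *b \<phi> i) = 0"
  obtains L where "Vector_Spaces.linear s1 s2 L" and "\<And>i. i \<in> P \<Longrightarrow> L (f i) = \<phi> i"
proof -
  obtain B where B: "B \<subseteq> f ` P" "vs1.independent B" "f ` P \<subseteq> vs1.span B"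
    using vs1.maximal_independent_subset[of "f ` P"] by blast
  define idx where "idx b = (SOME i. i \<in> P \<and> f i = b)" for b
  have idx: "idx b \<in> P" "f (idx b) = b" if "b \<in> B" for b
    using someI_ex[of "\<lambda>i. i \<in> P \<and> f i = b"] that B(1) by (auto simp: idx_def)
  define L where "L = construct B (\<phi> \<circ> idx)"
  have linear: "Vector_Spaces.linear s1 s2 L"
    unfolding L_def using B(2) by (rule linear_construct)
  have L_basis: "L b = \<phi> (idx b)" if "b \<in> B" for b
    unfolding L_def using B(2) that by (simp add: construct_basis)
  have "L (f i) = \<phi> i" if i: "i \<in> P" for i
  \<comment> \<open>If i is a chosen index, f i is a basis vector; otherwise i is distinct from the indices
    chosen for the basis vectors expressing f i, and these give a relation with coefficient 1 at i.\<close>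
  proof (cases "i \<in> idx ` B")
    case True
    then obtain b where "b \<in> B" "i = idx b" by blast
    then show ?thesis
      using idx(2) L_basis by metis
  next
    case False
    obtain t r where t: "finite t" "t \<subseteq> B" and fi: "f i = (\<Sum>b\<in>t. r b *a b)"
      using B(3) i unfolding vs1.span_explicit by blast
    have inj: "inj_on idx t"
      using idx t(2) by (metis inj_on_inverseI subsetD)
    define a where "a j = (if j = i then 1 else - r (f j))" for j
    have i_notin: "i \<notin> idx ` t"
      using False t(2) by blast
    have a_idx: "a (idx b) = - r b" if "b \<in> t" for b
      using that t(2) i_notin idx by (auto simp: a_def)
    have "(\<Sum>j\<in>insert i (idx ` t). a j *a f j) = f i + (\<Sum>b\<in>t. a (idx b) *a f (idx b))"
      using t(1) i_notin inj by (simp add: a_def sum.reindex)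
    also have "\<dots> = f i - (\<Sum>b\<in>t. r b *a b)"
      using t(2) idx a_idx by (simp add: sum_negf[symmetric] subset_iff cong: sum.cong)
    finally have "(\<Sum>j\<in>insert i (idx ` t). a j *a f j) = 0"
      using fi by simp
    moreover have "finite (insert i (idx ` t))" "insert i (idx ` t) \<subseteq> P"
      using t idx i by auto
    ultimately have "(\<Sum>j\<in>insert i (idx ` t). a j *b \<phi> j) = 0"
      by (intro rel)
    moreover have "(\<Sum>j\<in>insert i (idx ` t). a j *b \<phi> j) = \<phi> i - (\<Sum>b\<in>t. r b *b \<phi> (idx b))"
      using t i_notin inj a_idx by (simp add: a_def sum.reindex sum_negf[symmetric] cong: sum.cong)
    ultimately have "\<phi> i = (\<Sum>b\<in>t. r b *b \<phi> (idx b))"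
      by simp
    also have "\<dots> = L (f i)"
      using t L_basis by (simp add: fi linear_sum[OF linear] linear_scale[OF linear] subset_iff)
    finally show ?thesis by simp
  qed
  with linear that show ?thesis by blast
qed

definition coboundary :: "('g, 'b) monoid_scheme \<Rightarrow> ('g \<Rightarrow> 'a::ab_group_add) \<Rightarrow> 'g \<Rightarrow> 'g \<Rightarrow> 'a" where
  "coboundary G b g h = b g + b h - b (g \<otimes>\<^bsub>G\<^esub> h)"

definition bar_boundary :: "('g, 'b) monoid_scheme \<Rightarrow> 'g \<Rightarrow> 'g \<Rightarrow> 'g \<Rightarrow> real" where
  "bar_boundary G g h = indicator {g} + indicator {h} - indicator {g \<otimes>\<^bsub>G\<^esub> h}"

definition coboundary_mod_2pi :: "('g, 'b) monoid_scheme \<Rightarrow> ('g \<Rightarrow> 'g \<Rightarrow> real) \<Rightarrow> bool" where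
  "coboundary_mod_2pi G c \<longleftrightarrow>
     (\<exists>\<theta>. \<forall>g\<in>carrier G. \<forall>h\<in>carrier G. \<exists>n::int. c g h - coboundary G \<theta> g h = 2 * pi * of_int n)"

lemma sum_bar_boundary_mult_eq_coboundary:
  assumes "finite X" and "{g, h, g \<otimes>\<^bsub>G\<^esub> h} \<subseteq> X"
  shows "(\<Sum>x\<in>X. bar_boundary G g h x * \<theta> x) = coboundary G \<theta> g h"
  using assms
  by (simp add: bar_boundary_def coboundary_def indicator_def algebra_simps sum.distrib sum_subtractf
      if_distrib[of "\<lambda>a. a * _"] cong: if_cong)

lemma circle_coboundary2_exp_imp_coboundary_mod_2pi:
  assumes "monoid G" and "circle_coboundary2 G (\<lambda>g h. exp (\<i> * complex_of_real (c g h)))"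
  shows "coboundary_mod_2pi G c"
proof -
  obtain b where b_unit: "\<forall>g\<in>carrier G. cmod (b g) = 1"
    and b_cob: "\<forall>g\<in>carrier G. \<forall>h\<in>carrier G.
           exp (\<i> * complex_of_real (c g h)) = b g * b h * inverse (b (g \<otimes>\<^bsub>G\<^esub> h))"
    using assms(2) unfolding circle_coboundary2_def by blast
  define \<theta> where "\<theta> x = Arg (b x)" for x
  have b_exp: "b x = exp (\<i> * complex_of_real (\<theta> x))" if "x \<in> carrier G" for x
    unfolding \<theta>_def using b_unit that by (metis complex_norm_eq_1_exp_eq)
  have "\<exists>n::int. c g h - coboundary G \<theta> g h = 2 * pi * of_int n"
    if g: "g \<in> carrier G" and h: "h \<in> carrier G" for g h
  proof -
    define z where "z = \<i> * complex_of_real (c g h - coboundary G \<theta> g h)"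
    have gh: "g \<otimes>\<^bsub>G\<^esub> h \<in> carrier G"
      using assms(1) g h by (rule monoid.m_closed)
    have "exp z = exp (\<i> * complex_of_real (c g h)) / (b g * b h * inverse (b (g \<otimes>\<^bsub>G\<^esub> h)))"
      using b_exp[OF g] b_exp[OF h] b_exp[OF gh]
      by (simp add: z_def coboundary_def exp_diff exp_add field_simps)
    also have "\<dots> = 1"
      using b_cob g h b_unit[rule_format, OF gh] by auto
    finally obtain n :: int where "Im z = of_int (2 * n) * pi"
      using exp_eq_1[of z] by blast
    then show ?thesis
      by (intro exI[of _ n]) (simp add: z_def)
  qed
  then show ?thesis
    unfolding coboundary_mod_2pi_def by blast
qed

lemma sum_coboundary_eq_0_if_bar_relation:
  fixes a :: "'g \<times> 'g \<Rightarrow> real"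
  assumes "finite I" and rel: "\<And>x. (\<Sum>(g, h)\<in>I. a (g, h) * bar_boundary G g h x) = 0"
  shows "(\<Sum>(g, h)\<in>I. a (g, h) * coboundary G \<theta> g h) = 0"
proof -
  define X where "X = (\<Union>(g, h)\<in>I. {g, h, g \<otimes>\<^bsub>G\<^esub> h})"
  have X: "finite X"
    using assms(1) by (auto simp: X_def)
  have "(\<Sum>(g, h)\<in>I. a (g, h) * coboundary G \<theta> g h)
      = (\<Sum>(g, h)\<in>I. a (g, h) * (\<Sum>x\<in>X. bar_boundary G g h x * \<theta> x))"
  proof (intro sum.cong refl, clarify)
    fix g h assume "(g, h) \<in> I"
    then have "coboundary G \<theta> g h = (\<Sum>x\<in>X. bar_boundary G g h x * \<theta> x)"
      by (intro sum_bar_boundary_mult_eq_coboundary[OF X, symmetric]) (auto simp: X_def)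
    then show "a (g, h) * coboundary G \<theta> g h = a (g, h) * (\<Sum>x\<in>X. bar_boundary G g h x * \<theta> x)"
      by simp
  qed
  also have "\<dots> = (\<Sum>x\<in>X. \<theta> x * (\<Sum>(g, h)\<in>I. a (g, h) * bar_boundary G g h x))"
    by (simp add: sum_distrib_left sum_distrib_right sum.swap[of _ I X] case_prod_unfold algebra_simps)
  also have "\<dots> = 0"
    by (simp add: rel)
  finally show ?thesis .
qed

lemma sum_eq_0_if_bar_relation:
  fixes c :: "'g \<Rightarrow> 'g \<Rightarrow> real" and a :: "'g \<times> 'g \<Rightarrow> real"
  assumes mod_2pi: "\<And>r. coboundary_mod_2pi G (\<lambda>g h. r * c g h)"
    and I: "finite I" "I \<subseteq> carrier G \<times> carrier G"
    and rel: "\<And>x. (\<Sum>(g, h)\<in>I. a (g, h) * bar_boundary G g h x) = 0"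
  shows "(\<Sum>(g, h)\<in>I. a (g, h) * c g h) = 0"
proof (rule eq_0_if_multiples_in_countable)
  show "countable ((\<lambda>n. \<Sum>p\<in>I. a p * (2 * pi * of_int (n p))) ` (I \<rightarrow>\<^sub>E (UNIV :: int set)))"
    using I(1) by (intro countable_image countable_PiE) auto
  fix r
  obtain \<theta> where \<theta>: "\<forall>g\<in>carrier G. \<forall>h\<in>carrier G.
      \<exists>n::int. r * c g h - coboundary G \<theta> g h = 2 * pi * of_int n"
    using mod_2pi unfolding coboundary_mod_2pi_def by blast
  have "\<forall>p\<in>I. \<exists>n::int. r * case_prod c p = 2 * pi * of_int n + case_prod (coboundary G \<theta>) p"
    using I(2) \<theta> by (auto simp: diff_eq_eq)
  then obtain n :: "'g \<times> 'g \<Rightarrow> int"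
    where n: "\<forall>p\<in>I. r * case_prod c p = 2 * pi * of_int (n p) + case_prod (coboundary G \<theta>) p"
    by (rule bchoice[elim_format]) blast
  have "r * (\<Sum>(g, h)\<in>I. a (g, h) * c g h) = (\<Sum>p\<in>I. a p * (r * case_prod c p))"
    by (simp add: sum_distrib_left case_prod_unfold algebra_simps)
  also have "\<dots> = (\<Sum>p\<in>I. a p * (2 * pi * of_int (n p)) + a p * case_prod (coboundary G \<theta>) p)"
    using n by (intro sum.cong) (simp_all add: distrib_left)
  also have "\<dots> = (\<Sum>p\<in>I. a p * (2 * pi * of_int (n p)))
      + (\<Sum>(g, h)\<in>I. a (g, h) * coboundary G \<theta> g h)"
    by (simp add: sum.distrib case_prod_unfold)
  also have "\<dots> = (\<Sum>p\<in>I. a p * (2 * pi * of_int (restrict n I p)))"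
    using sum_coboundary_eq_0_if_bar_relation[OF I(1) rel] by simp
  finally show "r * (\<Sum>(g, h)\<in>I. a (g, h) * c g h)
      \<in> (\<lambda>n. \<Sum>p\<in>I. a p * (2 * pi * of_int (n p))) ` (I \<rightarrow>\<^sub>E UNIV)"
    by (intro image_eqI[of _ _ "restrict n I"]) auto
qed

theorem corollary6p2:
  fixes G :: "('g, 'b) monoid_scheme" and c :: "'g \<Rightarrow> 'g \<Rightarrow> real"
  assumes "group G"
    and "countable (carrier G)"
    and "real_cocycle2 G c"
    and "\<forall>r::real. circle_coboundary2 G (\<lambda>g h. exp (\<i> * complex_of_real (r * c g h)))"
  shows "real_coboundary2 G c"
proof -
  have mod_2pi: "coboundary_mod_2pi G (\<lambda>g h. r * c g h)" for r
    by (intro circle_coboundary2_exp_imp_coboundary_mod_2pi group.is_monoid[OF assms(1)]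
        assms(4)[rule_format])
  have relations: "(\<Sum>p\<in>I. a p *\<^sub>R case_prod c p) = 0"
    if "finite I" "I \<subseteq> carrier G \<times> carrier G"
      and "(\<Sum>p\<in>I. (\<lambda>x. a p * case_prod (bar_boundary G) p x)) = 0" for I a
    using that sum_eq_0_if_bar_relation[OF mod_2pi]
    by (simp add: fun_eq_iff sum_fun_apply case_prod_unfold)
  obtain L where L: "Vector_Spaces.linear (\<lambda>r (u :: 'g \<Rightarrow> real) x. r * u x) scaleR L"
    and L_bar: "\<And>p. p \<in> carrier G \<times> carrier G \<Longrightarrow> L (case_prod (bar_boundary G) p) = case_prod c p"
    using vector_space_pair.linear_extend_respecting_relations[OF vector_space_pair_fun_real relations]
    by blast
  interpret L: Vector_Spaces.linear "\<lambda>r (u :: 'g \<Rightarrow> real) x. r * u x"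
      "scaleR :: real \<Rightarrow> real \<Rightarrow> real" L
    by (fact L)
  show ?thesis
    unfolding real_coboundary2_def
  proof (intro exI[of _ "\<lambda>x. L (indicator {x})"] ballI)
    fix g h assume "g \<in> carrier G" "h \<in> carrier G"
    then show "c g h = L (indicator {g}) + L (indicator {h}) - L (indicator {g \<otimes>\<^bsub>G\<^esub> h})"
      using L_bar[of "(g, h)"] by (simp add: bar_boundary_def L.add L.diff)
  qed
qed

end
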